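(* Let $H$ be a separable infinite-dimensional complex Hilbert space, let $D \subset H\setminus\{0\}$ be a countable dense subset of $H$, and let $R>0$. Let $B_R=\{T\in L(H): \|T\|\le R\}$. Then the set $L_{SC}(D)$ of operators $T\in B_R$ for which every $x\in D$ is a supercyclic vector is a dense $G_\delta$ subset of $B_R$ equipped with the strong operator topology. Moreover, for every $T\in L_{SC}(D)$ the set of supercyclic vectors of $T$ is residual in $H$ with respect to the norm topology.
   Context: $L(H)$ denotes the bounded linear operators on $H$. For $T\in L(H)$, a vector $x\in H$ is supercyclic for $T$ if the set $\mathbb{C}\{x,Tx,T^2x,\dots\}=\{aT^nx: a\in\mathbb{C}, n\ge 0\}$ is norm-dense in $H$. *)

theory Defs
  imports "HOL-Analysis.Analysis"
begin

text \<open>A complex Hilbert space is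
encoded as a (real) Hilbert space, i.e. a complete real inner product space, together with
a complex scalar multiplication extending the real one and satisfying the module axioms and
the norm identity. The complex inner product is then recovered by the polarisation formula
below; conversely, every complex Hilbert space (with its underlying real structure and
real inner product Re of the complex one) is an instance of this class.\<close>

class complex_hilbert = real_inner + complete_space +
  fixes scaleC :: "complex \<Rightarrow> 'a \<Rightarrow> 'a"  (infixr \<open>*\<^sub>C\<close> 75)
  assumes scaleC_of_real: "scaleC (complex_of_real r) x = r *\<^sub>R x"
    and scaleC_add_right: "scaleC a (x + y) = scaleC a x + scaleC a y"
    and scaleC_add_left: "scaleC (a + b) x = scaleC a x + scaleC b x"
    and scaleC_scaleC: "scaleC a (scaleC b x) = scaleC (a * b) x"
    and scaleC_one: "scaleC 1 x = x"
    and norm_scaleC: "norm (scaleC a x) = cmod a * norm x"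

context complex_hilbert
begin

text \<open>The complex inner product (conjugate-linear in the first argument).\<close>
definition cinner :: "'a \<Rightarrow> 'a \<Rightarrow> complex" where
  "cinner x y = Complex (inner x y) (inner x (scaleC \<i> y) * -1)"

definition cspan :: "'a set \<Rightarrow> 'a set" where
  "cspan B = {\<Sum>b\<in>F. scaleC (c b) b | F c. finite F \<and> F \<subseteq> B}"

definition infinite_dimensional :: "'a itself \<Rightarrow> bool" where
  "infinite_dimensional _ \<longleftrightarrow> \<not> (\<exists>B. finite B \<and> cspan B = (UNIV :: 'a set))"

end

text \<open>L(H): bounded complex-linear operators, as elements of the type of bounded
real-linear operators that in addition commute with complex scalars. The norm of a
blinfun is the operator norm.\<close>
definition clinear_op :: "('a::complex_hilbert \<Rightarrow>\<^sub>L 'a) \<Rightarrow> bool" where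
  "clinear_op T \<longleftrightarrow> (\<forall>c x. blinfun_apply T (scaleC c x) = scaleC c (blinfun_apply T x))"

definition ball_ops :: "real \<Rightarrow> ('a::complex_hilbert \<Rightarrow>\<^sub>L 'a) set" where
  "ball_ops R = {T. clinear_op T \<and> norm T \<le> R}"

definition supercyclic :: "('a::complex_hilbert \<Rightarrow>\<^sub>L 'a) \<Rightarrow> 'a \<Rightarrow> bool" where
  "supercyclic T x \<longleftrightarrow>
     closure {scaleC a ((blinfun_apply T ^^ n) x) | a n. True} = UNIV"

definition residual :: "'a::topological_space set \<Rightarrow> bool" where
  "residual S \<longleftrightarrow> (\<exists>U :: nat \<Rightarrow> 'a set. (\<forall>n. open (U n) \<and> closure (U n) = UNIV)
                     \<and> (\<Inter>n. U n) \<subseteq> S)"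

end

theory Submission
  imports Defs
begin

text \<open>
  Let $(d_j)$ enumerate $D$. The operators in $B_R$ all of whose vectors in $D$ are supercyclic
  form the intersection of the countably many sets $U(x, d_j, 1/(m+1))$ of operators $T$ some
  multiple of some $T^n x$ of which lies within $1/(m+1)$ of $d_j$, for $x \<in> D$.
  These sets are open in the strong operator topology, because $T \<mapsto> T^n x$ is continuous
  on norm-bounded sets. They are also dense: given $T$ and finitely many vectors $e_i$, perturb
  the $e_i$, the $T e_i$ and the target $y$ into a finite-dimensional complex subspace $E$ not
  containing $x$, and let $S$ act as $c P T P$ on $E$ ($P$ the orthogonal projection) and as a
  weighted shift along a complex-orthonormal chain $w_0, \<dots>, w_N$ orthogonal to $E$ that starts
  at the normalised component of $x$ orthogonal to $E$ and ends in $y$. The weights $R$ and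
  $\<kappa> = R \<surd>(1 - c^2)$ keep $\<parallel>S\<parallel> \<le> R$, $S$ is close to $T$ on the $e_i$, and
  $S^{N+1} x$ is a multiple of $y$ up to an error of order $c^{N+1}$.
  On $B_R$ the strong operator topology is completely metrizable, since $T \<mapsto> (T d_k)_k$
  embeds it as a closed subset of $H^{\<nat>}$, so Baire's theorem applies. For each such $T$
  the supercyclic vectors form, by the same description, a countable intersection of open sets
  containing the dense set $D$.
\<close>

section \<open>Multiplication by the imaginary unit\<close>

definition imult :: "'a::complex_hilbert \<Rightarrow> 'a" where
  "imult x = \<i> *\<^sub>C x"

lemma scaleC_eq_imult: "c *\<^sub>C x = Re c *\<^sub>R x + Im c *\<^sub>R imult x"
proof -
  have "c = complex_of_real (Re c) + complex_of_real (Im c) * \<i>"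
    by (simp add: complex_eq_iff)
  then have "c *\<^sub>C x = complex_of_real (Re c) *\<^sub>C x + (complex_of_real (Im c) * \<i>) *\<^sub>C x"
    by (metis scaleC_add_left)
  then show ?thesis
    by (simp add: scaleC_of_real imult_def flip: scaleC_scaleC)
qed

lemma imult_add: "imult (x + y) = imult x + imult y"
  by (simp add: imult_def scaleC_add_right)

lemma imult_scaleR: "imult (r *\<^sub>R x) = r *\<^sub>R imult x"
  by (simp add: imult_def mult.commute scaleC_scaleC flip: scaleC_of_real)

lemma norm_imult [simp]: "norm (imult x) = norm x"
  by (simp add: imult_def norm_scaleC)

lemma bounded_linear_imult: "bounded_linear imult"
  by (rule bounded_linear_intro[where K=1]) (auto simp: imult_add imult_scaleR)

lemmas linear_imult = bounded_linear.linear[OF bounded_linear_imult]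
lemmas imult_diff = linear_diff[OF linear_imult]
lemmas imult_zero [simp] = linear_0[OF linear_imult]
lemmas imult_sum = linear_sum[OF linear_imult]

lemma imult_imult [simp]: "imult (imult x) = - x"
proof -
  have "imult (imult x) = complex_of_real (-1) *\<^sub>C x"
    by (simp add: imult_def scaleC_scaleC)
  then show ?thesis
    by (simp only: scaleC_of_real scaleR_minus1_left)
qed

lemma inner_imult_imult [simp]: "imult x \<bullet> imult y = x \<bullet> y"
proof -
  have "(norm (imult x + imult y))\<^sup>2 - (norm (imult x - imult y))\<^sup>2 = (norm (x + y))\<^sup>2 - (norm (x - y))\<^sup>2"
    by (simp flip: imult_add imult_diff)
  then show ?thesis
    by (simp add: power2_norm_eq_inner inner_add inner_diff inner_commute algebra_simps)
qed

lemma inner_imult_left: "imult x \<bullet> y = - (x \<bullet> imult y)"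
  using inner_imult_imult[of x "imult y"] by simp

lemma inner_imult_self [simp]: "x \<bullet> imult x = 0" "imult x \<bullet> x = 0"
  using inner_imult_left[of x x] by (simp_all add: inner_commute)

lemma bounded_linear_scaleC: "bounded_linear (scaleC c :: 'a::complex_hilbert \<Rightarrow> 'a)"
  unfolding scaleC_eq_imult[abs_def]
  by (intro bounded_linear_add bounded_linear_scaleR_right bounded_linear_ident
      bounded_linear_compose[OF bounded_linear_scaleR_right bounded_linear_imult])

lemma clinear_op_iff_imult: "clinear_op T \<longleftrightarrow> (\<forall>x. T (imult x) = imult (T x))"
proof
  assume "\<forall>x. T (imult x) = imult (T x)"
  then show "clinear_op T"
    by (simp add: clinear_op_def scaleC_eq_imult blinfun.add_right blinfun.scaleR_right)
qed (simp add: clinear_op_def imult_def)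

section \<open>Orthogonal projections onto finite-dimensional subspaces\<close>

definition orthogonal_projection :: "'a::real_inner set \<Rightarrow> ('a \<Rightarrow> 'a) \<Rightarrow> bool" where
  "orthogonal_projection E P \<longleftrightarrow> (\<forall>z. P z \<in> E \<and> (\<forall>w\<in>E. w \<bullet> (z - P z) = 0))"

lemma orthogonal_projectionD:
  assumes "orthogonal_projection E P"
  shows "P z \<in> E" "w \<in> E \<Longrightarrow> w \<bullet> (z - P z) = 0"
  using assms by (auto simp: orthogonal_projection_def)

lemma orthogonal_projection_pythagoras:
  assumes "orthogonal_projection E P"
  shows "(norm z)\<^sup>2 = (norm (P z))\<^sup>2 + (norm (z - P z))\<^sup>2"
proof -
  have "P z \<bullet> (z - P z) = 0"
    using orthogonal_projectionD[OF assms] by blast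
  then show ?thesis
    using norm_add_Pythagorean[of "P z" "z - P z"] by (simp add: orthogonal_def)
qed

lemma norm_orthogonal_projection_le:
  "orthogonal_projection E P \<Longrightarrow> norm (P z) \<le> norm z"
  by (rule power2_le_imp_le) (simp_all add: orthogonal_projection_pythagoras[of E P z])

lemma orthogonal_projection_unique:
  assumes P: "orthogonal_projection E P" and E: "subspace E"
    and p: "p \<in> E" "\<And>w. w \<in> E \<Longrightarrow> w \<bullet> (z - p) = 0"
  shows "P z = p"
proof -
  have d: "P z - p \<in> E"
    using orthogonal_projectionD(1)[OF P] p E by (simp add: subspace_diff)
  then have "(P z - p) \<bullet> (z - p) - (P z - p) \<bullet> (z - P z) = 0"
    using orthogonal_projectionD(2)[OF P] p by simp
  then have "(P z - p) \<bullet> (P z - p) = 0"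
    by (simp add: inner_diff_right)
  then show ?thesis
    by simp
qed

lemma orthogonal_projection_nearest:
  assumes P: "orthogonal_projection E P" and E: "subspace E" and f: "f \<in> E"
  shows "norm (z - P z) \<le> norm (z - f)"
proof -
  have "P z - f \<in> E"
    using orthogonal_projectionD(1)[OF P] E f by (simp add: subspace_diff)
  then have "(P z - f) \<bullet> (z - P z) = 0"
    using orthogonal_projectionD(2)[OF P] by blast
  then have "(norm (z - f))\<^sup>2 = (norm (P z - f))\<^sup>2 + (norm (z - P z))\<^sup>2"
    using norm_add_Pythagorean[of "P z - f" "z - P z"] by (simp add: orthogonal_def)
  then show ?thesis
    by (simp add: power2_le_imp_le)
qed

lemma orthogonal_projection_linear:
  assumes P: "orthogonal_projection E P" and E: "subspace E"
  shows "linear P"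
proof (rule linearI)
  note PD = orthogonal_projectionD[OF P]
  show "P (x + y) = P x + P y" for x y
  proof (rule orthogonal_projection_unique[OF P E])
    show "P x + P y \<in> E"
      using PD(1) E by (simp add: subspace_add)
    fix w assume "w \<in> E"
    then have "w \<bullet> (x - P x) + w \<bullet> (y - P y) = 0"
      using PD(2) by simp
    then show "w \<bullet> (x + y - (P x + P y)) = 0"
      by (simp add: inner_diff_right inner_add_right)
  qed
  show "P (c *\<^sub>R x) = c *\<^sub>R P x" for c x
  proof (rule orthogonal_projection_unique[OF P E])
    show "c *\<^sub>R P x \<in> E"
      using PD(1) E by (simp add: subspace_scale)
    fix w assume "w \<in> E"
    then have "c * (w \<bullet> (x - P x)) = 0"
      using PD(2) by simp
    then show "w \<bullet> (c *\<^sub>R x - c *\<^sub>R P x) = 0"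
      by (simp add: inner_diff_right)
  qed
qed

lemma orthogonal_projection_bounded_linear:
  "orthogonal_projection E P \<Longrightarrow> subspace E \<Longrightarrow> bounded_linear P"
  by (rule bounded_linear_intro[where K=1])
    (simp_all add: linear_add linear_scale orthogonal_projection_linear norm_orthogonal_projection_le)

lemma orthogonal_projection_exists:
  fixes V :: "'a::real_inner set"
  assumes "finite V"
  shows "\<exists>P. orthogonal_projection (span V) P"
proof -
  obtain U where U: "finite U" "span U = span V" "pairwise orthogonal U"
    using basis_orthogonal[OF assms] by blast
  define P where "P z = (\<Sum>b\<in>U. (b \<bullet> z / (b \<bullet> b)) *\<^sub>R b)" for z
  have "P z \<in> span V" for z
    unfolding P_def U(2)[symmetric] by (intro span_sum span_mul span_base)
  moreover have orth: "x \<bullet> (z - P z) = 0" if "x \<in> U" for x z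
  proof -
    have "(\<Sum>b\<in>U. b \<bullet> z * (x \<bullet> b) / (b \<bullet> b)) = (\<Sum>b\<in>U. if b = x then x \<bullet> z else 0)"
      using U(3) that by (intro sum.cong) (auto simp: pairwise_def orthogonal_def inner_commute)
    then show ?thesis
      using U(1) that by (simp add: P_def inner_diff_right inner_sum_right)
  qed
  moreover have "w \<bullet> (z - P z) = 0" if "w \<in> span V" for w z
    using that unfolding U(2)[symmetric]
    by (rule span_induct) (auto simp: orth subspace_def inner_add_left)
  ultimately show ?thesis
    unfolding orthogonal_projection_def by blast
qed

lemma span_biorthogonal_expansion:
  fixes b f :: "'i \<Rightarrow> 'a::real_inner"
  assumes I: "finite I" and bi: "\<And>k i. k \<in> I \<Longrightarrow> i \<in> I \<Longrightarrow> f k \<bullet> b i = (if k = i then 1 else 0)"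
    and u: "u \<in> span (b ` I)"
  shows "(\<Sum>k\<in>I. (f k \<bullet> u) *\<^sub>R b k) = u"
  using u
proof (rule span_induct)
  show "subspace {u. (\<Sum>k\<in>I. (f k \<bullet> u) *\<^sub>R b k) = u}"
    by (rule subspaceI) (auto simp: inner_add_right scaleR_add_left sum.distrib simp flip: scaleR_sum_right scaleR_scaleR)
next
  fix u assume "u \<in> b ` I"
  then obtain i where "i \<in> I" "u = b i"
    by blast
  then have "(\<Sum>k\<in>I. (f k \<bullet> u) *\<^sub>R b k) = (\<Sum>k\<in>I. if k = i then b k else 0)"
    using bi by (intro sum.cong) auto
  then show "(\<Sum>k\<in>I. (f k \<bullet> u) *\<^sub>R b k) = u"
    using I \<open>i \<in> I\<close> \<open>u = b i\<close> by simp
qed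

lemma imult_span_subset:
  "imult ` span (V \<union> imult ` V) \<subseteq> span (V \<union> imult ` V)"
proof -
  have "imult ` (V \<union> imult ` V) \<subseteq> span (V \<union> imult ` V)"
    by (auto simp: span_base span_neg)
  then show ?thesis
    by (simp add: span_linear_image[OF linear_imult, symmetric] span_minimal)
qed

lemma cspanI: "finite F \<Longrightarrow> F \<subseteq> V \<Longrightarrow> (\<Sum>b\<in>F. c b *\<^sub>C b) \<in> cspan V"
  unfolding cspan_def by blast

lemma span_imult_subset_cspan: "span (V \<union> imult ` V) \<subseteq> cspan V"
proof (rule span_minimal)
  show "subspace (cspan V)"
  proof (rule subspaceI)
    show "0 \<in> cspan V"
      unfolding cspan_def by (rule CollectI, rule exI[of _ "{}"]) auto
  next
    fix u v assume "u \<in> cspan V" "v \<in> cspan V"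
    then obtain F c G d where F: "finite F" "F \<subseteq> V" "u = (\<Sum>b\<in>F. c b *\<^sub>C b)"
      and G: "finite G" "G \<subseteq> V" "v = (\<Sum>b\<in>G. d b *\<^sub>C b)"
      by (auto simp: cspan_def)
    have "u = (\<Sum>b\<in>F \<union> G. (if b \<in> F then c b else 0) *\<^sub>C b)"
      unfolding F(3) using F G by (intro sum.mono_neutral_cong_left) (auto simp: scaleC_eq_imult)
    moreover have "v = (\<Sum>b\<in>F \<union> G. (if b \<in> G then d b else 0) *\<^sub>C b)"
      unfolding G(3) using F G by (intro sum.mono_neutral_cong_left) (auto simp: scaleC_eq_imult)
    ultimately have "u + v = (\<Sum>b\<in>F \<union> G. ((if b \<in> F then c b else 0) + (if b \<in> G then d b else 0)) *\<^sub>C b)"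
      by (simp add: scaleC_add_left sum.distrib)
    then show "u + v \<in> cspan V"
      using F G by (simp add: cspanI)
  next
    fix r :: real and u assume "u \<in> cspan V"
    then obtain F c where F: "finite F" "F \<subseteq> V" "u = (\<Sum>b\<in>F. c b *\<^sub>C b)"
      by (auto simp: cspan_def)
    then have "r *\<^sub>R u = (\<Sum>b\<in>F. (complex_of_real r * c b) *\<^sub>C b)"
      by (simp add: scaleR_sum_right scaleC_of_real flip: scaleC_scaleC)
    then show "r *\<^sub>R u \<in> cspan V"
      using F by (simp add: cspanI)
  qed
  show "V \<union> imult ` V \<subseteq> cspan V"
  proof safe
    fix v assume "v \<in> V"
    then have "{v} \<subseteq> V"
      by simp
    moreover have "v = (\<Sum>b\<in>{v}. 1 *\<^sub>C b)" "imult v = (\<Sum>b\<in>{v}. \<i> *\<^sub>C b)"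
      by (simp_all add: scaleC_one imult_def)
    ultimately show "v \<in> cspan V" "imult v \<in> cspan V"
      using cspanI[of "{v}" V "\<lambda>_. 1"] cspanI[of "{v}" V "\<lambda>_. \<i>"] by simp_all
  qed
qed

lemma orthogonal_projection_imult:
  assumes P: "orthogonal_projection E P" and E: "subspace E" "imult ` E \<subseteq> E"
  shows "P (imult z) = imult (P z)"
proof (rule orthogonal_projection_unique[OF P E(1)])
  show "imult (P z) \<in> E"
    using orthogonal_projectionD(1)[OF P] E(2) by blast
  fix w assume "w \<in> E"
  then have "imult w \<bullet> (z - P z) = 0"
    using orthogonal_projectionD(2)[OF P] E(2) by blast
  then show "w \<bullet> (imult z - imult (P z)) = 0"
    by (simp add: inner_imult_left imult_diff)
qed

section \<open>Complex orthonormal families\<close>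

text \<open>Orthogonality with respect to the complex inner product \<open>cinner\<close>.\<close>

definition corthogonal :: "'a::complex_hilbert \<Rightarrow> 'a \<Rightarrow> bool" where
  "corthogonal a b \<longleftrightarrow> a \<bullet> b = 0 \<and> imult a \<bullet> b = 0"

lemma corthogonal_commute: "corthogonal a b \<longleftrightarrow> corthogonal b a"
  unfolding corthogonal_def by (metis inner_imult_left inner_commute neg_equal_0_iff_equal)

lemma corthogonalD:
  assumes "corthogonal a b"
  shows "a \<bullet> b = 0" "imult a \<bullet> b = 0" "a \<bullet> imult b = 0" "imult a \<bullet> imult b = 0"
  using assms unfolding corthogonal_def by (metis inner_imult_imult inner_imult_left neg_equal_0_iff_equal)+

lemma corthogonal_scaleR_left: "corthogonal a b \<Longrightarrow> corthogonal (t *\<^sub>R a) b"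
  by (simp add: corthogonal_def imult_scaleR)

lemma corthogonal_span:
  assumes "\<forall>s\<in>V. corthogonal s w" and "e \<in> span (V \<union> imult ` V)"
  shows "corthogonal e w"
  using assms(2)
proof (rule span_induct)
  show "subspace {e. corthogonal e w}"
    by (rule subspaceI) (auto simp: corthogonal_def imult_add imult_scaleR inner_add_left)
qed (use assms(1) in \<open>auto simp: corthogonal_def\<close>)

definition corthonormal :: "'i set \<Rightarrow> ('i \<Rightarrow> 'a::complex_hilbert) \<Rightarrow> bool" where
  "corthonormal I w \<longleftrightarrow> (\<forall>j\<in>I. norm (w j) = 1) \<and> (\<forall>j\<in>I. \<forall>k\<in>I. j \<noteq> k \<longrightarrow> corthogonal (w j) (w k))"

lemma exists_unit_corthogonal:
  fixes S :: "'a::complex_hilbert set"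
  assumes infdim: "infinite_dimensional TYPE('a)" and S: "finite S"
  shows "\<exists>w. norm w = 1 \<and> (\<forall>s\<in>S. corthogonal s w)"
proof -
  define E where "E = span (S \<union> imult ` S)"
  obtain P where P: "orthogonal_projection E P"
    using orthogonal_projection_exists[of "S \<union> imult ` S"] S unfolding E_def by blast
  have "E \<noteq> UNIV"
    using infdim S span_imult_subset_cspan[of S] unfolding E_def infinite_dimensional_def by blast
  then obtain v where v: "v \<notin> E"
    by blast
  then have "v - P v \<noteq> 0"
    using orthogonal_projectionD(1)[OF P, of v] by auto
  moreover have "s \<bullet> (v - P v) = 0" "imult s \<bullet> (v - P v) = 0" if "s \<in> S" for s
    using that orthogonal_projectionD(2)[OF P] by (auto simp: E_def span_base)
  ultimately show ?thesis
    by (intro exI[of _ "(v - P v) /\<^sub>R norm (v - P v)"]) (simp add: corthogonal_def)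
qed

lemma exists_corthonormal_family:
  fixes S :: "'a::complex_hilbert set"
  assumes infdim: "infinite_dimensional TYPE('a)" and S: "finite S"
  shows "\<exists>w :: nat \<Rightarrow> 'a. corthonormal {..<n} w \<and> (\<forall>j<n. \<forall>s\<in>S. corthogonal s (w j))"
proof (induction n)
  case 0
  show ?case
    by (simp add: corthonormal_def)
next
  case (Suc n)
  then obtain w :: "nat \<Rightarrow> 'a" where w: "corthonormal {..<n} w" "\<forall>j<n. \<forall>s\<in>S. corthogonal s (w j)"
    by blast
  obtain v where v: "norm v = 1" "\<forall>s\<in>S \<union> w ` {..<n}. corthogonal s v"
    using exists_unit_corthogonal[OF infdim, of "S \<union> w ` {..<n}"] S by auto
  have "corthonormal {..<Suc n} (w(n := v))"
    using w(1) v by (auto simp: corthonormal_def less_Suc_eq corthogonal_commute)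
  moreover have "\<forall>j<Suc n. \<forall>s\<in>S. corthogonal s ((w(n := v)) j)"
    using w(2) v by (auto simp: less_Suc_eq)
  ultimately show ?case
    by blast
qed

lemma corthonormal_case_nat:
  assumes "norm v = 1" "corthonormal {..<n} u" "\<forall>j<n. corthogonal v (u j)"
  shows "corthonormal {..n} (case_nat v u)"
  unfolding corthonormal_def
proof (intro conjI ballI impI)
  fix j assume "j \<in> {..n}"
  then show "norm (case_nat v u j) = 1"
    using assms by (cases j) (auto simp: corthonormal_def)
next
  fix j k assume "j \<in> {..n}" "k \<in> {..n}" "j \<noteq> k"
  then show "corthogonal (case_nat v u j) (case_nat v u k)"
    using assms by (cases j; cases k) (auto simp: corthonormal_def corthogonal_commute)
qed

lemma exists_perturbation_avoiding:
  fixes v :: "nat \<Rightarrow> 'a::complex_hilbert"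
  assumes infdim: "infinite_dimensional TYPE('a)" and x: "x \<noteq> 0" and \<delta>: "\<delta> > 0"
  shows "\<exists>v'. (\<forall>i<m. norm (v' i - v i) = \<delta>) \<and> x \<notin> span (v' ` {..<m} \<union> imult ` v' ` {..<m})"
proof -
  obtain z :: "nat \<Rightarrow> 'a" where z: "corthonormal {..<m} z"
    and z_orth: "\<forall>j<m. \<forall>s\<in>insert x (v ` {..<m}). corthogonal s (z j)"
    using exists_corthonormal_family[OF infdim, of "insert x (v ` {..<m})" m] by blast
  define v' where "v' i = v i + \<delta> *\<^sub>R z i" for i
  \<comment> \<open>the vectors $z_k / \delta$ and $i z_k / \delta$ form a biorthogonal system for the $v'_i$ and $i v'_i$\<close>
  define b where "b = (\<lambda>(i, t). if t then imult (v' i) else v' i)"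
  define f where "f = (\<lambda>(k, t). (1 / \<delta>) *\<^sub>R (if t then imult (z k) else z k))"
  have "z k \<bullet> v' i = (if k = i then \<delta> else 0)" "imult (z k) \<bullet> v' i = 0"
    if "k < m" "i < m" for k i
  proof -
    have "corthogonal (z k) (v i)"
      using z_orth that by (simp add: corthogonal_commute)
    moreover have "z k \<bullet> z i = (if k = i then 1 else 0)" "imult (z k) \<bullet> z i = 0"
      using z that by (cases "k = i"; auto simp: corthonormal_def corthogonal_def dot_square_norm)+
    ultimately show "z k \<bullet> v' i = (if k = i then \<delta> else 0)" "imult (z k) \<bullet> v' i = 0"
      by (auto simp: v'_def inner_add_right corthogonal_def)
  qed
  then have "f k \<bullet> b i = (if k = i then 1 else 0)" if "k \<in> {..<m} \<times> UNIV" "i \<in> {..<m} \<times> UNIV" for k i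
    using that \<delta> inner_imult_left[of "z (fst k)" "v' (fst i)"]
    by (cases k; cases i) (auto simp: f_def b_def)
  moreover have "b ` ({..<m} \<times> UNIV) = v' ` {..<m} \<union> imult ` v' ` {..<m}"
    by (force simp: b_def image_iff)
  moreover have "f k \<bullet> x = 0" if "k \<in> {..<m} \<times> UNIV" for k
  proof -
    have "corthogonal (z (fst k)) x"
      using z_orth that by (auto simp: corthogonal_commute)
    then show ?thesis
      by (cases k) (auto simp: f_def corthogonal_def)
  qed
  ultimately have "x \<notin> span (v' ` {..<m} \<union> imult ` v' ` {..<m})"
    using span_biorthogonal_expansion[of "{..<m} \<times> UNIV" f b x] x by auto
  moreover have "norm (v' i - v i) = \<delta>" if "i < m" for i
    using z \<delta> that by (simp add: v'_def corthonormal_def)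
  ultimately show ?thesis
    by blast
qed

lemma power2_norm_sum_corthonormal:
  assumes I: "finite I" and u: "corthonormal I u"
  shows "(norm (\<Sum>j\<in>I. a j *\<^sub>R u j + b j *\<^sub>R imult (u j)))\<^sup>2 = (\<Sum>j\<in>I. (a j)\<^sup>2 + (b j)\<^sup>2)"
proof -
  have "pairwise (\<lambda>j k. orthogonal (a j *\<^sub>R u j + b j *\<^sub>R imult (u j)) (a k *\<^sub>R u k + b k *\<^sub>R imult (u k))) I"
  proof (rule pairwiseI)
    fix j k assume "j \<in> I" "k \<in> I" "j \<noteq> k"
    then have "corthogonal (u j) (u k)"
      using u by (simp add: corthonormal_def)
    then show "orthogonal (a j *\<^sub>R u j + b j *\<^sub>R imult (u j)) (a k *\<^sub>R u k + b k *\<^sub>R imult (u k))"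
      by (simp add: orthogonal_def inner_add_left inner_add_right corthogonalD)
  qed
  moreover have "(norm (a j *\<^sub>R u j + b j *\<^sub>R imult (u j)))\<^sup>2 = (a j)\<^sup>2 + (b j)\<^sup>2" if "j \<in> I" for j
  proof -
    have "orthogonal (a j *\<^sub>R u j) (b j *\<^sub>R imult (u j))"
      by (simp add: orthogonal_def)
    then show ?thesis
      using u that by (simp add: norm_add_Pythagorean corthonormal_def power_mult_distrib)
  qed
  ultimately show ?thesis
    using I by (simp add: norm_sum_Pythagorean)
qed

lemma bessel_inequality_corthonormal:
  assumes I: "finite I" and u: "corthonormal I u"
  shows "(\<Sum>j\<in>I. (u j \<bullet> z)\<^sup>2 + (imult (u j) \<bullet> z)\<^sup>2) \<le> (norm z)\<^sup>2"
proof -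
  define s where "s = (\<Sum>j\<in>I. (u j \<bullet> z) *\<^sub>R u j + (imult (u j) \<bullet> z) *\<^sub>R imult (u j))"
  have "(norm s)\<^sup>2 = (\<Sum>j\<in>I. (u j \<bullet> z)\<^sup>2 + (imult (u j) \<bullet> z)\<^sup>2)"
    unfolding s_def by (rule power2_norm_sum_corthonormal[OF I u])
  moreover have "z \<bullet> s = (\<Sum>j\<in>I. (u j \<bullet> z)\<^sup>2 + (imult (u j) \<bullet> z)\<^sup>2)"
    by (simp add: s_def inner_sum_right inner_add_right power2_eq_square inner_commute)
  moreover have "0 \<le> (norm (z - s))\<^sup>2"
    by simp
  then have "0 \<le> (norm z)\<^sup>2 - 2 * (z \<bullet> s) + (norm s)\<^sup>2"
    by (simp add: power2_norm_eq_inner inner_diff inner_commute)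
  ultimately show ?thesis
    by simp
qed

section \<open>The shift construction\<close>

text \<open>The complex rank-one operator $z \mapsto \langle f, z\rangle g$.\<close>

definition crank_one :: "'a::complex_hilbert \<Rightarrow> 'a \<Rightarrow> 'a \<Rightarrow> 'a" where
  "crank_one f g z = (f \<bullet> z) *\<^sub>R g + (imult f \<bullet> z) *\<^sub>R imult g"

lemma bounded_linear_crank_one: "bounded_linear (crank_one f g)"
  unfolding crank_one_def
  by (intro bounded_linear_add bounded_linear_compose[OF bounded_linear_scaleR_left bounded_linear_inner_right])

lemma crank_one_imult: "crank_one f g (imult z) = imult (crank_one f g z)"
  by (simp add: crank_one_def imult_add imult_diff imult_scaleR inner_imult_left)

lemma crank_one_unit: "norm f = 1 \<Longrightarrow> crank_one f g f = g"
  by (simp add: crank_one_def dot_square_norm)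

lemma crank_one_corthogonal: "corthogonal f z \<Longrightarrow> crank_one f g z = 0"
  by (simp add: crank_one_def corthogonal_def)

lemma norm_crank_one:
  "norm (crank_one f g z) = sqrt ((f \<bullet> z)\<^sup>2 + (imult f \<bullet> z)\<^sup>2) * norm g"
proof -
  have "orthogonal ((f \<bullet> z) *\<^sub>R g) ((imult f \<bullet> z) *\<^sub>R imult g)"
    by (simp add: orthogonal_def)
  then have "(norm (crank_one f g z))\<^sup>2 = ((f \<bullet> z)\<^sup>2 + (imult f \<bullet> z)\<^sup>2) * (norm g)\<^sup>2"
    by (simp add: crank_one_def norm_add_Pythagorean power_mult_distrib algebra_simps)
  then have "sqrt ((norm (crank_one f g z))\<^sup>2) = sqrt (((f \<bullet> z)\<^sup>2 + (imult f \<bullet> z)\<^sup>2) * (norm g)\<^sup>2)"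
    by (rule arg_cong)
  then show ?thesis
    by (simp add: real_sqrt_mult)
qed

lemma norm_blinfun_apply_le: "norm T \<le> R \<Longrightarrow> norm (blinfun_apply T z) \<le> R * norm z"
  by (metis mult_right_mono norm_blinfun norm_ge_zero order_trans)

text \<open>
  The operator \<open>S\<close> acts on \<open>E\<close> as \<open>A = c P T P\<close> and maps $w_j$ to $R w_{j+1}$ and $w_N$ to
  $\<kappa> y$; as $(c R)^2 + \<kappa>^2 = R^2$, its norm is at most $R$.
\<close>

locale shift_construction =
  fixes E :: "'a::complex_hilbert set" and P :: "'a \<Rightarrow> 'a" and T :: "'a \<Rightarrow>\<^sub>L 'a"
    and R c :: real and N :: nat and w :: "nat \<Rightarrow> 'a" and y :: 'a
  assumes subspace_E: "subspace E" and imult_E: "imult ` E \<subseteq> E"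
    and projection: "orthogonal_projection E P"
    and T: "T \<in> ball_ops R" and R_pos: "R > 0" and c: "0 < c" "c \<le> 1"
    and w: "corthonormal {..N} w" and w_orth_E: "\<And>j e. j \<le> N \<Longrightarrow> e \<in> E \<Longrightarrow> e \<bullet> w j = 0"
    and y: "y \<in> E" "norm y = 1"
begin

definition \<kappa> :: real where
  "\<kappa> = R * sqrt (1 - c\<^sup>2)"

definition A :: "'a \<Rightarrow> 'a" where
  "A z = c *\<^sub>R P (T (P z))"

definition S :: "'a \<Rightarrow> 'a" where
  "S z = A z + R *\<^sub>R (\<Sum>j<N. crank_one (w j) (w (Suc j)) z) + \<kappa> *\<^sub>R crank_one (w N) y z"

lemma norm_T_le: "norm (T z) \<le> R * norm z"
  using T by (simp add: ball_ops_def norm_blinfun_apply_le)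

lemma T_imult: "T (imult z) = imult (T z)"
  using T by (simp add: ball_ops_def clinear_op_iff_imult)

lemma P_in_E: "P z \<in> E"
  using orthogonal_projectionD(1)[OF projection] .

lemma P_bounded_linear: "bounded_linear P"
  by (rule orthogonal_projection_bounded_linear[OF projection subspace_E])

lemma P_fixes: "e \<in> E \<Longrightarrow> P e = e"
  by (rule orthogonal_projection_unique[OF projection subspace_E]) simp_all

lemma corthogonal_E_w: "j \<le> N \<Longrightarrow> e \<in> E \<Longrightarrow> corthogonal e (w j)"
  using w_orth_E imult_E by (auto simp: corthogonal_def)

lemma P_w: "j \<le> N \<Longrightarrow> P (w j) = 0"
  by (rule orthogonal_projection_unique[OF projection subspace_E])
    (simp_all add: subspace_0[OF subspace_E] w_orth_E)

lemma \<kappa>_nonneg: "\<kappa> \<ge> 0"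
  using R_pos c by (simp add: \<kappa>_def power_le_one)

lemma A_in_E: "A z \<in> E"
  unfolding A_def using P_in_E subspace_E by (simp add: subspace_scale)

lemma norm_A_le: "norm (A z) \<le> c * R * norm (P z)"
proof -
  have "norm (A z) \<le> c * norm (T (P z))"
    using c norm_orthogonal_projection_le[OF projection] by (simp add: A_def mult_left_mono)
  also have "\<dots> \<le> c * (R * norm (P z))"
    using c norm_T_le by (simp add: mult_left_mono)
  finally show ?thesis
    by simp
qed

lemma S_on_E: "e \<in> E \<Longrightarrow> S e = A e"
  by (simp add: S_def crank_one_corthogonal corthogonal_commute corthogonal_E_w)

lemma crank_one_w: "j \<le> N \<Longrightarrow> k \<le> N \<Longrightarrow> crank_one (w k) g (w j) = (if k = j then g else 0)"
  using w by (auto simp: corthonormal_def crank_one_unit crank_one_corthogonal)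

lemma A_w: "j \<le> N \<Longrightarrow> A (w j) = 0"
  using P_w linear_0[OF bounded_linear.linear[OF P_bounded_linear]] by (simp add: A_def)

lemma S_shift: "j < N \<Longrightarrow> S (w j) = R *\<^sub>R w (Suc j)"
proof -
  assume "j < N"
  then have "(\<Sum>k<N. crank_one (w k) (w (Suc k)) (w j)) = (\<Sum>k<N. if k = j then w (Suc k) else 0)"
    by (intro sum.cong) (simp_all add: crank_one_w)
  then show ?thesis
    using \<open>j < N\<close> by (simp add: S_def A_w crank_one_w)
qed

lemma S_last: "S (w N) = \<kappa> *\<^sub>R y"
proof -
  have "(\<Sum>k<N. crank_one (w k) (w (Suc k)) (w N)) = 0"
    by (intro sum.neutral) (simp add: crank_one_w)
  then show ?thesis
    by (simp add: S_def A_w crank_one_w)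
qed

lemma S_bounded_linear: "bounded_linear S"
proof -
  have "bounded_linear A"
    unfolding A_def[abs_def]
    by (intro bounded_linear_compose[OF bounded_linear_scaleR_right] bounded_linear_compose[OF P_bounded_linear]
        bounded_linear_compose[OF blinfun.bounded_linear_right] P_bounded_linear)
  then show ?thesis
    unfolding S_def[abs_def]
    by (intro bounded_linear_add bounded_linear_compose[OF bounded_linear_scaleR_right]
        bounded_linear_sum bounded_linear_crank_one)
qed

lemma S_imult: "S (imult z) = imult (S z)"
  by (simp add: S_def A_def orthogonal_projection_imult[OF projection subspace_E imult_E] T_imult
      crank_one_imult imult_add imult_scaleR imult_sum)

lemma power2_norm_shift_sum:
  "(norm (\<Sum>j<N. crank_one (w j) (w (Suc j)) z))\<^sup>2 = (\<Sum>j<N. (w j \<bullet> z)\<^sup>2 + (imult (w j) \<bullet> z)\<^sup>2)"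
proof -
  have "corthonormal {..<N} (\<lambda>j. w (Suc j))"
    using w by (simp add: corthonormal_def)
  then show ?thesis
    unfolding crank_one_def by (rule power2_norm_sum_corthonormal[OF finite_lessThan])
qed

lemma inner_shift_sum_E: "e \<in> E \<Longrightarrow> e \<bullet> (\<Sum>j<N. crank_one (w j) (w (Suc j)) z) = 0"
  using corthogonal_E_w by (simp add: crank_one_def inner_sum_right inner_add_right corthogonalD)

lemma bessel_inequality_with_projection:
  "(norm (P z))\<^sup>2 + (\<Sum>j\<le>N. (w j \<bullet> z)\<^sup>2 + (imult (w j) \<bullet> z)\<^sup>2) \<le> (norm z)\<^sup>2"
proof -
  have "w j \<bullet> (z - P z) = w j \<bullet> z" "imult (w j) \<bullet> (z - P z) = imult (w j) \<bullet> z" if "j \<le> N" for j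
    using corthogonalD(1,3)[OF corthogonal_E_w[OF that P_in_E, of z]]
    by (simp_all add: inner_diff_right inner_commute)
  then have "(\<Sum>j\<le>N. (w j \<bullet> z)\<^sup>2 + (imult (w j) \<bullet> z)\<^sup>2) \<le> (norm (z - P z))\<^sup>2"
    using bessel_inequality_corthonormal[OF finite_atMost w, of "z - P z"] by simp
  then show ?thesis
    using orthogonal_projection_pythagoras[OF projection, of z] by simp
qed

lemma power2_norm_E_component:
  "(norm (A z + \<kappa> *\<^sub>R crank_one (w N) y z))\<^sup>2
     \<le> R\<^sup>2 * ((norm (P z))\<^sup>2 + ((w N \<bullet> z)\<^sup>2 + (imult (w N) \<bullet> z)\<^sup>2))"
proof -
  define u where "u = norm (P z)"
  define v where "v = sqrt ((w N \<bullet> z)\<^sup>2 + (imult (w N) \<bullet> z)\<^sup>2)"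
  have "norm (A z + \<kappa> *\<^sub>R crank_one (w N) y z) \<le> norm (A z) + norm (\<kappa> *\<^sub>R crank_one (w N) y z)"
    by (rule norm_triangle_ineq)
  also have "\<dots> = norm (A z) + \<kappa> * norm (crank_one (w N) y z)"
    using \<kappa>_nonneg by simp
  also have "\<dots> \<le> c * R * u + \<kappa> * v"
    using norm_A_le y(2) by (simp add: u_def v_def norm_crank_one)
  finally have "norm (A z + \<kappa> *\<^sub>R crank_one (w N) y z) \<le> c * R * u + \<kappa> * v" .
  then have "(norm (A z + \<kappa> *\<^sub>R crank_one (w N) y z))\<^sup>2 \<le> (c * R * u + \<kappa> * v)\<^sup>2"
    by (simp add: power_mono)
  also have "\<dots> \<le> ((c * R)\<^sup>2 + \<kappa>\<^sup>2) * (u\<^sup>2 + v\<^sup>2)"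
    using zero_le_power2[of "c * R * v - \<kappa> * u"] by (simp add: power2_eq_square algebra_simps)
  also have "(c * R)\<^sup>2 + \<kappa>\<^sup>2 = R\<^sup>2"
    using c by (simp add: \<kappa>_def power_mult_distrib power_le_one algebra_simps)
  finally show ?thesis
    by (simp add: u_def v_def)
qed

lemma norm_S_le: "norm (S z) \<le> R * norm z"
proof -
  define X where "X = A z + \<kappa> *\<^sub>R crank_one (w N) y z"
  define Y where "Y = (\<Sum>j<N. crank_one (w j) (w (Suc j)) z)"
  have "X \<in> E"
    using A_in_E y(1) imult_E subspace_E
    by (auto simp: X_def crank_one_def intro!: subspace_add subspace_scale)
  then have "orthogonal X (R *\<^sub>R Y)"
    by (simp add: orthogonal_def Y_def inner_shift_sum_E)
  moreover have "S z = X + R *\<^sub>R Y"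
    by (simp add: S_def X_def Y_def algebra_simps)
  ultimately have "(norm (S z))\<^sup>2 = (norm X)\<^sup>2 + R\<^sup>2 * (norm Y)\<^sup>2"
    by (simp add: norm_add_Pythagorean power_mult_distrib)
  also have "\<dots> \<le> R\<^sup>2 * ((norm (P z))\<^sup>2 + (\<Sum>j\<le>N. (w j \<bullet> z)\<^sup>2 + (imult (w j) \<bullet> z)\<^sup>2))"
    using power2_norm_E_component[of z] unfolding X_def Y_def power2_norm_shift_sum lessThan_Suc_atMost[symmetric]
    by (simp add: algebra_simps)
  also have "\<dots> \<le> R\<^sup>2 * (norm z)\<^sup>2"
    using bessel_inequality_with_projection by (simp add: mult_left_mono)
  finally have "(norm (S z))\<^sup>2 \<le> (R * norm z)\<^sup>2"
    by (simp only: power_mult_distrib)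
  then show ?thesis
    by (rule power2_le_imp_le) (use R_pos in simp)
qed

lemma S_orbit:
  assumes x: "x = P x + t *\<^sub>R w 0" and n: "n \<le> N"
  shows "(S ^^ n) x = (A ^^ n) (P x) + (t * R ^ n) *\<^sub>R w n"
  using n
proof (induction n)
  case 0
  then show ?case
    using x by simp
next
  case (Suc n)
  have "(A ^^ n) (P x) \<in> E"
    by (cases n) (simp_all add: P_in_E A_in_E)
  then have "S ((A ^^ n) (P x)) = (A ^^ Suc n) (P x)"
    by (simp add: S_on_E)
  moreover have "S (w n) = R *\<^sub>R w (Suc n)"
    using Suc.prems by (simp add: S_shift)
  ultimately show ?case
    using Suc by (simp add: linear_add linear_scale bounded_linear.linear[OF S_bounded_linear])
qed

lemma S_orbit_last:
  assumes x: "x = P x + t *\<^sub>R w 0"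
  shows "(S ^^ Suc N) x = (A ^^ Suc N) (P x) + (t * R ^ N * \<kappa>) *\<^sub>R y"
proof -
  have "(A ^^ N) (P x) \<in> E"
    by (cases N) (simp_all add: P_in_E A_in_E)
  then show ?thesis
    using S_orbit[OF x order_refl] S_last
    by (simp add: S_on_E linear_add linear_scale bounded_linear.linear[OF S_bounded_linear])
qed

lemma norm_A_power_le: "norm ((A ^^ n) z) \<le> (c * R) ^ n * norm z"
proof (induction n)
  case (Suc n)
  have "norm ((A ^^ Suc n) z) \<le> c * R * norm (P ((A ^^ n) z))"
    using norm_A_le by simp
  also have "\<dots> \<le> c * R * norm ((A ^^ n) z)"
    by (rule mult_left_mono) (use norm_orthogonal_projection_le[OF projection] c R_pos in simp_all)
  also have "\<dots> \<le> c * R * ((c * R) ^ n * norm z)"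
    using Suc c R_pos by (simp add: mult_left_mono)
  finally show ?case
    by (simp add: mult.assoc)
qed simp

lemma norm_S_minus_T_le:
  assumes "e' \<in> E" "f' \<in> E"
  shows "norm (S e - T e) \<le> 3 * R * norm (e - e') + norm (T e - f') + (1 - c) * R * norm e'"
proof -
  define a where "a = S (e - e')"
  define b where "b = (c - 1) *\<^sub>R P (T e')"
  define d where "d = P (T e') - T e'"
  define f where "f = T (e' - e)"
  have "S (e - e') = S e - c *\<^sub>R P (T e')"
    using S_on_E[OF assms(1)] P_fixes[OF assms(1)]
    by (simp add: A_def linear_diff[OF bounded_linear.linear[OF S_bounded_linear]])
  then have eq: "S e - T e = a + b + d + f"
    by (simp add: a_def b_def d_def f_def blinfun.diff_right scaleR_diff_left)
  have "norm (S (e - e')) \<le> R * norm (e - e')" "norm (T (e' - e)) \<le> R * norm (e - e')"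
    using norm_S_le norm_T_le[of "e' - e"] by (simp_all add: norm_minus_commute)
  moreover have "norm ((c - 1) *\<^sub>R P (T e')) \<le> (1 - c) * R * norm e'"
  proof -
    have "norm ((c - 1) *\<^sub>R P (T e')) \<le> (1 - c) * norm (T e')"
      using c norm_orthogonal_projection_le[OF projection] by (simp add: mult_left_mono)
    also have "\<dots> \<le> (1 - c) * (R * norm e')"
      using c norm_T_le by (simp add: mult_left_mono)
    finally show ?thesis
      by simp
  qed
  moreover have "norm (P (T e') - T e') \<le> R * norm (e - e') + norm (T e - f')"
  proof -
    have "norm (T e' - P (T e')) \<le> norm (T e' - f')"
      by (rule orthogonal_projection_nearest[OF projection subspace_E assms(2)])
    also have "\<dots> \<le> norm (T e' - T e) + norm (T e - f')"
      using norm_triangle_ineq[of "T e' - T e" "T e - f'"] by simp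
    also have "norm (T e' - T e) \<le> R * norm (e - e')"
      using norm_T_le[of "e' - e"] by (simp add: blinfun.diff_right norm_minus_commute)
    finally show ?thesis
      by (simp add: norm_minus_commute)
  qed
  ultimately show ?thesis
    using norm_triangle_ineq[of "a + b + d" f] norm_triangle_ineq[of "a + b" d] norm_triangle_ineq[of a b]
    unfolding eq a_def b_def d_def f_def by linarith
qed

lemma scaled_orbit_near:
  assumes x: "x = P x + t *\<^sub>R w 0" and t: "t > 0" and \<kappa>: "\<kappa> > 0"
  shows "norm ((s / (t * R ^ N * \<kappa>)) *\<^sub>R (S ^^ Suc N) x - s *\<^sub>R y) \<le> \<bar>s\<bar> * R * norm x / (t * \<kappa>) * c ^ Suc N"
proof -
  define \<rho> where "\<rho> = s / (t * R ^ N * \<kappa>)"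
  have "\<rho> *\<^sub>R (S ^^ Suc N) x - s *\<^sub>R y = \<rho> *\<^sub>R (A ^^ Suc N) (P x)"
    unfolding S_orbit_last[OF x] using t R_pos \<kappa> by (simp add: \<rho>_def scaleR_add_right)
  moreover have "norm ((A ^^ Suc N) (P x)) \<le> (c * R) ^ Suc N * norm x"
    using norm_A_power_le[of "Suc N" "P x"] norm_orthogonal_projection_le[OF projection, of x] c R_pos
    by (meson mult_left_mono order_trans zero_le_mult_iff zero_le_power less_imp_le)
  ultimately have "norm (\<rho> *\<^sub>R (S ^^ Suc N) x - s *\<^sub>R y) \<le> \<bar>\<rho>\<bar> * ((c * R) ^ Suc N * norm x)"
    by (simp add: mult_left_mono)
  also have "\<dots> = \<bar>s\<bar> * R * norm x / (t * \<kappa>) * c ^ Suc N"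
    using t R_pos \<kappa> by (simp add: \<rho>_def abs_divide power_mult_distrib field_simps)
  finally show ?thesis
    by (simp add: \<rho>_def)
qed

end

lemma exists_projection_avoiding:
  fixes v :: "nat \<Rightarrow> 'a::complex_hilbert"
  assumes infdim: "infinite_dimensional TYPE('a)" and x: "x \<noteq> 0" and \<delta>: "\<delta> > 0"
  obtains v' E V P where "\<And>i. i < m \<Longrightarrow> norm (v' i - v i) = \<delta>" "\<And>i. i < m \<Longrightarrow> v' i \<in> E"
    "subspace E" "imult ` E \<subseteq> E" "finite V" "E = span (V \<union> imult ` V)"
    "orthogonal_projection E P" "x \<notin> E"
proof -
  obtain v' where "\<forall>i<m. norm (v' i - v i) = \<delta>" "x \<notin> span (v' ` {..<m} \<union> imult ` v' ` {..<m})"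
    using exists_perturbation_avoiding[OF infdim x \<delta>] by blast
  moreover obtain P where "orthogonal_projection (span (v' ` {..<m} \<union> imult ` v' ` {..<m})) P"
    using orthogonal_projection_exists[of "v' ` {..<m} \<union> imult ` v' ` {..<m}"] by blast
  ultimately show ?thesis
    by (intro that[of v' "span (v' ` {..<m} \<union> imult ` v' ` {..<m})" "v' ` {..<m}" P])
      (auto simp: span_base imult_span_subset)
qed

lemma exists_corthonormal_chain:
  fixes V :: "'a::complex_hilbert set" and N :: nat
  assumes infdim: "infinite_dimensional TYPE('a)" and V: "finite V"
    and x0: "x0 \<noteq> 0" "\<forall>s\<in>V. corthogonal s x0"
  shows "\<exists>w. corthonormal {..N} w \<and> w 0 = x0 /\<^sub>R norm x0
              \<and> (\<forall>j\<le>N. \<forall>e\<in>span (V \<union> imult ` V). e \<bullet> w j = 0)"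
proof -
  obtain u :: "nat \<Rightarrow> 'a" where u: "corthonormal {..<N} u" "\<forall>j<N. \<forall>s\<in>insert x0 V. corthogonal s (u j)"
    using exists_corthonormal_family[OF infdim, of "insert x0 V" N] V by blast
  define w where "w = case_nat (x0 /\<^sub>R norm x0) u"
  have "corthonormal {..N} w"
    unfolding w_def using x0(1) u by (intro corthonormal_case_nat) (simp_all add: corthogonal_scaleR_left)
  moreover have orth_V: "\<forall>s\<in>V. corthogonal s (w j)" if "j \<le> N" for j
    using x0(2) u(2) that
    by (cases j) (auto simp: w_def corthogonal_commute[of _ "_ /\<^sub>R _"] corthogonal_scaleR_left
        corthogonal_commute[of _ x0])
  then have "e \<bullet> w j = 0" if "j \<le> N" "e \<in> span (V \<union> imult ` V)" for j e
    using corthogonal_span[OF orth_V[OF that(1)] that(2)] by (simp add: corthogonal_def)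
  ultimately show ?thesis
    by (auto simp: w_def)
qed

lemma exists_shift_operator:
  fixes T :: "'a::complex_hilbert \<Rightarrow>\<^sub>L 'a" and N :: nat
  assumes infdim: "infinite_dimensional TYPE('a)" and T: "T \<in> ball_ops R" and R: "R > 0"
    and c_bounds: "0 < c" "c < 1" and E: "subspace E" "imult ` E \<subseteq> E"
    and V: "finite V" "E = span (V \<union> imult ` V)" and P: "orthogonal_projection E P"
    and x: "x \<notin> E" and y: "y \<in> E" "y \<noteq> 0"
  shows "\<exists>S\<in>ball_ops R. (\<forall>z. \<forall>e\<in>E. \<forall>f\<in>E. norm (blinfun_apply S z - T z)
                                   \<le> 3 * R * norm (z - e) + norm (T z - f) + (1 - c) * R * norm e)
           \<and> (\<exists>a. dist (a *\<^sub>C (blinfun_apply S ^^ Suc N) x) y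
                   \<le> norm y * R * norm x / (norm (x - P x) * (R * sqrt (1 - c\<^sup>2))) * c ^ Suc N)"
proof -
  define xp where "xp = x - P x"
  have "xp \<noteq> 0"
    using x orthogonal_projectionD(1)[OF P, of x] by (auto simp: xp_def)
  have "corthogonal s xp" if "s \<in> V" for s
  proof -
    have "s \<in> E" "imult s \<in> E"
      using that V(2) by (auto intro: span_base)
    then show ?thesis
      using orthogonal_projectionD(2)[OF P] by (simp add: corthogonal_def xp_def)
  qed
  then obtain w where w: "corthonormal {..N} w" and w0: "w 0 = xp /\<^sub>R norm xp"
    and w_E: "\<forall>j\<le>N. \<forall>e\<in>E. e \<bullet> w j = 0"
    using exists_corthonormal_chain[OF infdim V(1) \<open>xp \<noteq> 0\<close>] V(2) by blast
  interpret shift_construction E P T R c N w "y /\<^sub>R norm y"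
    using E P T R c_bounds w w_E y by unfold_locales (auto simp: subspace_scale)
  have S: "blinfun_apply (Blinfun S) = S"
    by (rule bounded_linear_Blinfun_apply[OF S_bounded_linear])
  have "clinear_op (Blinfun S)"
    unfolding clinear_op_iff_imult S by (simp add: S_imult)
  moreover have "norm (Blinfun S) \<le> R"
    by (rule norm_blinfun_bound) (use R norm_S_le in \<open>simp_all add: S\<close>)
  ultimately have "Blinfun S \<in> ball_ops R"
    by (simp add: ball_ops_def)
  moreover have "dist (complex_of_real (norm y / (norm xp * R ^ N * \<kappa>)) *\<^sub>C (S ^^ Suc N) x) y
      \<le> norm y * R * norm x / (norm xp * (R * sqrt (1 - c\<^sup>2))) * c ^ Suc N"
  proof -
    have "\<kappa> = R * sqrt (1 - c\<^sup>2)" "\<kappa> > 0"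
      using R c_bounds power_strict_mono[of c 1 2] by (simp_all add: \<kappa>_def)
    moreover have "norm ((norm y / (norm xp * R ^ N * \<kappa>)) *\<^sub>R (S ^^ Suc N) x - norm y *\<^sub>R (y /\<^sub>R norm y))
        \<le> \<bar>norm y\<bar> * R * norm x / (norm xp * \<kappa>) * c ^ Suc N"
      by (rule scaled_orbit_near) (use w0 \<open>xp \<noteq> 0\<close> calculation in \<open>simp_all add: xp_def\<close>)
    moreover have "norm y *\<^sub>R (y /\<^sub>R norm y) = y"
      using y(2) by (simp add: field_simps)
    ultimately show ?thesis
      unfolding scaleC_of_real dist_norm by (simp only: abs_norm_cancel)
  qed
  ultimately show ?thesis
    using norm_S_minus_T_le unfolding xp_def by (intro bexI[of _ "Blinfun S"]) (auto simp only: S)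
qed

lemma exists_power_small:
  fixes c K :: real
  assumes "0 < c" "c < 1" "\<eta> > 0"
  obtains N where "K * c ^ Suc N < \<eta>"
proof -
  obtain N where N: "c ^ N < \<eta> / (\<bar>K\<bar> + 1)"
    using real_arch_pow_inv[of "\<eta> / (\<bar>K\<bar> + 1)" c] assms by auto
  have "K * c ^ Suc N \<le> \<bar>K\<bar> * c ^ N"
    using assms power_decreasing[of N "Suc N" c] by (intro mult_mono) auto
  also have "\<dots> \<le> \<bar>K\<bar> * (\<eta> / (\<bar>K\<bar> + 1))"
    using N by (intro mult_left_mono) auto
  also have "\<dots> < \<eta>"
    using assms by (simp add: field_simps)
  finally show ?thesis
    using that by blast
qed

lemma exists_approximation_parameters:
  fixes R M \<epsilon> r :: real
  assumes R: "R > 0" and M: "M \<ge> 0" and \<epsilon>: "\<epsilon> > 0" and r: "r > 0"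
  obtains c \<delta> where "0 < c" "c < 1" "0 < \<delta>" "\<delta> \<le> r / 2"
    "(3 * R + 1) * \<delta> + (1 - c) * R * (M + \<delta>) < \<epsilon>"
proof -
  define \<delta> where "\<delta> = min (r / 2) (min 1 (\<epsilon> / (4 * (3 * R + 1))))"
  define c where "c = max (1 / 2) (1 - \<epsilon> / (4 * R * (M + 1)))"
  have "\<delta> \<le> r / 2" "\<delta> \<le> min 1 (\<epsilon> / (4 * (3 * R + 1)))"
    unfolding \<delta>_def by (rule min.cobounded1 min.cobounded2)+
  then have \<delta>: "0 < \<delta>" "\<delta> \<le> r / 2" "\<delta> \<le> 1" "\<delta> \<le> \<epsilon> / (4 * (3 * R + 1))"
    using R \<epsilon> r by (auto simp: \<delta>_def)
  have c: "0 < c" "c < 1" "1 - c \<le> \<epsilon> / (4 * R * (M + 1))"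
    using R M \<epsilon> by (auto simp: c_def)
  have "(3 * R + 1) * \<delta> \<le> (3 * R + 1) * (\<epsilon> / (4 * (3 * R + 1)))"
    using R \<delta>(4) by (intro mult_left_mono) auto
  also have "\<dots> = \<epsilon> / 4"
    using R by (simp add: field_simps)
  finally have \<delta>_part: "(3 * R + 1) * \<delta> \<le> \<epsilon> / 4" .
  have "(1 - c) * R * (M + \<delta>) \<le> \<epsilon> / (4 * R * (M + 1)) * R * (M + 1)"
    using R M \<epsilon> c(2,3) \<delta>(1,3) by (intro mult_mono) auto
  also have "\<epsilon> / (4 * R * (M + 1)) * R * (M + 1) = \<epsilon> / 4"
  proof -
    have "R * (M + 1) \<noteq> 0"
      using R M by simp
    then show ?thesis
      by (simp add: divide_simps)
  qed
  finally have "(3 * R + 1) * \<delta> + (1 - c) * R * (M + \<delta>) < \<epsilon>"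
    using \<delta>_part \<epsilon> by linarith
  then show ?thesis
    using that c(1,2) \<delta>(1,2) by blast
qed

lemma exists_close_operator_with_orbit_near:
  fixes T :: "'a::complex_hilbert \<Rightarrow>\<^sub>L 'a"
  assumes infdim: "infinite_dimensional TYPE('a)" and T: "T \<in> ball_ops R" and R: "R > 0"
    and x: "x \<noteq> 0" and r: "r > 0" and \<epsilon>: "\<epsilon> > 0" and F: "finite F"
  shows "\<exists>S\<in>ball_ops R. (\<forall>z\<in>F. norm (blinfun_apply S z - T z) < \<epsilon>)
           \<and> (\<exists>n a. dist (a *\<^sub>C (blinfun_apply S ^^ n) x) y < r)"
proof (cases "norm y < r")
  case True
  then have "\<exists>n a. dist (a *\<^sub>C (blinfun_apply T ^^ n) x) y < r"
    by (intro exI[of _ 0]) (simp add: dist_norm scaleC_eq_imult)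
  then show ?thesis
    using T \<epsilon> by (intro bexI[of _ T]) auto
next
  case False
  obtain m :: nat and e where F_eq: "F = e ` {i. i < m}"
    using finite_imp_nat_seg_image_inj_on[OF F] by blast
  define M where "M = (\<Sum>i<m. norm (e i))"
  have M: "norm (e i) \<le> M" if "i < m" for i
    using that member_le_sum[of i "{..<m}" "\<lambda>i. norm (e i)"] by (simp add: M_def)
  obtain c \<delta> where c: "0 < c" "c < 1" and \<delta>: "0 < \<delta>" "\<delta> \<le> r / 2"
    and c\<delta>: "(3 * R + 1) * \<delta> + (1 - c) * R * (M + \<delta>) < \<epsilon>"
    using exists_approximation_parameters[OF R _ \<epsilon> r, of M] by (auto simp: M_def sum_nonneg)
  \<comment> \<open>the vectors $e_i$, $T e_i$ and $y$ are moved into a finite-dimensional $E$ avoiding $x$\<close>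
  define v where "v i = (if i < m then e i else if i < 2 * m then T (e (i - m)) else y)" for i
  obtain v' E V P where v': "\<And>i. i < 2 * m + 1 \<Longrightarrow> norm (v' i - v i) = \<delta>"
    and v'_E: "\<And>i. i < 2 * m + 1 \<Longrightarrow> v' i \<in> E" and E: "subspace E" "imult ` E \<subseteq> E"
    and V: "finite V" "E = span (V \<union> imult ` V)" and P: "orthogonal_projection E P" and x_E: "x \<notin> E"
    using exists_projection_avoiding[OF infdim x \<delta>(1), of "2 * m + 1" v] by metis
  have y': "dist (v' (2 * m)) y = \<delta>"
    using v'[of "2 * m"] by (simp add: v_def dist_norm)
  then have "v' (2 * m) \<noteq> 0"
    using False \<delta>(2) r by auto
  define K where "K = norm (v' (2 * m)) * R * norm x / (norm (x - P x) * (R * sqrt (1 - c\<^sup>2)))"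
  obtain N where N: "K * c ^ Suc N < r / 2"
    using exists_power_small[OF c, where K = K and \<eta> = "r / 2"] r by auto
  obtain S a where S: "S \<in> ball_ops R"
    and S_T: "\<forall>z. \<forall>e\<in>E. \<forall>f\<in>E.
      norm (blinfun_apply S z - T z) \<le> 3 * R * norm (z - e) + norm (T z - f) + (1 - c) * R * norm e"
    and orbit: "dist (a *\<^sub>C (blinfun_apply S ^^ Suc N) x) (v' (2 * m)) \<le> K * c ^ Suc N"
    using exists_shift_operator[OF infdim T R c E V P x_E v'_E[of "2 * m"] \<open>v' (2 * m) \<noteq> 0\<close>, of N]
    unfolding K_def by auto
  have "norm (blinfun_apply S z - T z) < \<epsilon>" if "z \<in> F" for z
  proof -
    obtain i where i: "i < m" "z = e i"
      using \<open>z \<in> F\<close> F_eq by auto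
    have e_v': "norm (e i - v' i) = \<delta>" and Te_v': "norm (T (e i) - v' (m + i)) = \<delta>"
      using v'[of i] v'[of "m + i"] i by (simp_all add: v_def norm_minus_commute)
    have "norm (v' i) \<le> M + \<delta>"
      using norm_triangle_sub[of "v' i" "e i"] e_v' M[OF i(1)] by (simp add: norm_minus_commute)
    then have "(1 - c) * R * norm (v' i) \<le> (1 - c) * R * (M + \<delta>)"
      using c R by (intro mult_left_mono) auto
    moreover have "norm (blinfun_apply S z - T z)
        \<le> 3 * R * norm (e i - v' i) + norm (T (e i) - v' (m + i)) + (1 - c) * R * norm (v' i)"
      using S_T v'_E[of i] v'_E[of "m + i"] i by simp
    ultimately show ?thesis
      using e_v' Te_v' c\<delta> by (simp add: algebra_simps)
  qed
  moreover have "dist (a *\<^sub>C (blinfun_apply S ^^ Suc N) x) y < r"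
    using orbit N y' \<delta>(2) dist_triangle[of "a *\<^sub>C (blinfun_apply S ^^ Suc N) x" y "v' (2 * m)"] by linarith
  ultimately show ?thesis
    using S by blast
qed

section \<open>The strong operator topology on norm balls\<close>

lemma openin_sot_contains_basic_nbhd:
  fixes W :: "('a::real_normed_vector \<Rightarrow>\<^sub>L 'b::real_normed_vector) set"
  assumes "openin (subtopology strong_operator_topology B) W" "T \<in> W"
  shows "\<exists>F \<epsilon>. finite F \<and> \<epsilon> > 0 \<and> {S \<in> B. \<forall>z\<in>F. norm (S z - T z) < \<epsilon>} \<subseteq> W"
proof -
  obtain U where U: "openin strong_operator_topology U" "W = U \<inter> B"
    using assms(1) by (auto simp: openin_subtopology)
  obtain V where V: "open V" "U = blinfun_apply -` V"
    using U(1) unfolding strong_operator_topology_def openin_pullback_topology by auto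
  have "openin (product_topology (\<lambda>_. euclidean) UNIV) V" "blinfun_apply T \<in> V"
    using V U assms(2) by (auto simp: euclidean_product_topology)
  from product_topology_open_contains_basis[OF this] obtain X :: "'a \<Rightarrow> 'b set" where
    X: "blinfun_apply T \<in> (\<Pi>\<^sub>E i\<in>UNIV. X i)" "\<And>i. open (X i)"
       "finite {i. X i \<noteq> UNIV}" "(\<Pi>\<^sub>E i\<in>UNIV. X i) \<subseteq> V"
    by auto
  define F where "F = {i. X i \<noteq> UNIV}"
  have "\<exists>e>0. ball (T i) e \<subseteq> X i" for i
    using X(1,2) open_contains_ball by blast
  then obtain e where e: "\<And>i. e i > 0" "\<And>i. ball (T i) (e i) \<subseteq> X i"
    by metis
  define \<epsilon> where "\<epsilon> = Min (insert 1 (e ` F))"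
  have \<epsilon>: "\<epsilon> > 0" "\<And>i. i \<in> F \<Longrightarrow> \<epsilon> \<le> e i"
    using X(3) e(1) by (auto simp: \<epsilon>_def F_def)
  have "S \<in> W" if S: "S \<in> B" "\<forall>z\<in>F. norm (S z - T z) < \<epsilon>" for S
  proof -
    have "S i \<in> X i" for i
    proof (cases "i \<in> F")
      case True
      then have "S i \<in> ball (T i) (e i)"
        using S(2) \<epsilon>(2)[OF True] by (auto simp: dist_norm norm_minus_commute)
      then show ?thesis
        using e(2) by blast
    qed (simp add: F_def)
    then show ?thesis
      using X(4) S(1) U V by auto
  qed
  then show ?thesis
    using X(3) \<epsilon>(1) unfolding F_def by blast
qed

lemma continuous_map_blinfun_apply_bounded:
  "continuous_map (prod_topology (subtopology strong_operator_topology {T. norm T \<le> R}) euclidean) euclidean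
     (\<lambda>(T :: 'a::real_normed_vector \<Rightarrow>\<^sub>L 'b::real_normed_vector, v). T v)"
  unfolding Met_TC.continuous_map_to_metric[simplified]
proof (clarsimp simp: strong_operator_topology_topspace)
  fix T :: "'a \<Rightarrow>\<^sub>L 'b" and v :: 'a and \<epsilon> :: real
  assume T: "norm T \<le> R" and \<epsilon>: "\<epsilon> > 0"
  define \<eta> where "\<eta> = \<epsilon> / (2 * (\<bar>R\<bar> + 1))"
  have \<eta>: "\<eta> > 0" "\<bar>R\<bar> * \<eta> < \<epsilon> / 2"
    using \<epsilon> by (auto simp: \<eta>_def field_simps)
  define U where "U = {S. norm S \<le> R \<and> dist (blinfun_apply S v) (T v) < \<epsilon> / 2} \<times> ball v \<eta>"
  have "openin (subtopology strong_operator_topology {T. norm T \<le> R}) {S. norm S \<le> R \<and> dist (blinfun_apply S v) (T v) < \<epsilon> / 2}"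
  proof -
    have "openin (subtopology strong_operator_topology {T. norm T \<le> R})
        {S \<in> topspace (subtopology strong_operator_topology {T. norm T \<le> R}). blinfun_apply S v \<in> ball (T v) (\<epsilon> / 2)}"
      by (rule openin_continuous_map_preimage[OF continuous_map_from_subtopology[OF
            strong_operator_topology_continuous_evaluation]]) simp
    then show ?thesis
      by (simp add: strong_operator_topology_topspace dist_commute)
  qed
  then have "openin (prod_topology (subtopology strong_operator_topology {T. norm T \<le> R}) euclidean) U"
    by (simp add: U_def openin_prod_Times_iff)
  moreover have "dist (T v) (S w) < \<epsilon>" if "(S, w) \<in> U" for S w
  proof -
    have "norm (S w - T v) \<le> norm (S (w - v)) + norm (S v - T v)"
      using norm_triangle_ineq[of "S (w - v)" "S v - T v"] by (simp add: blinfun.diff_right)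
    moreover have "norm (S (w - v)) \<le> \<bar>R\<bar> * \<eta>"
    proof -
      have "norm S \<le> R" "norm (w - v) \<le> \<eta>"
        using that by (auto simp: U_def dist_norm norm_minus_commute)
      moreover have "0 \<le> R"
        using norm_ge_zero[of S] \<open>norm S \<le> R\<close> by linarith
      ultimately have "R * norm (w - v) \<le> \<bar>R\<bar> * \<eta>"
        by (simp add: mult_left_mono)
      then show ?thesis
        using norm_blinfun_apply_le[OF \<open>norm S \<le> R\<close>, of "w - v"] by linarith
    qed
    moreover have "norm (S v - T v) < \<epsilon> / 2"
      using that by (simp add: U_def dist_norm)
    ultimately show ?thesis
      using \<eta>(2) by (simp add: dist_norm norm_minus_commute)
  qed
  moreover have "(T, v) \<in> U"
    using T \<epsilon> \<eta>(1) by (simp add: U_def)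
  ultimately show "\<exists>U. openin (prod_topology (subtopology strong_operator_topology {T. norm T \<le> R}) euclidean) U
      \<and> (T, v) \<in> U \<and> (\<forall>p\<in>U. dist (T v) (case p of (S, w) \<Rightarrow> blinfun_apply S w) < \<epsilon>)"
    by (intro exI[of _ U]) auto
qed

lemma bounded_linear_funpow:
  fixes f :: "'a::real_normed_vector \<Rightarrow> 'a"
  shows "bounded_linear f \<Longrightarrow> bounded_linear (f ^^ n)"
  by (induction n) (auto simp: id_def o_def intro: bounded_linear_compose)

lemma continuous_map_sot_funpow:
  assumes "B \<subseteq> {T. norm T \<le> R}"
  shows "continuous_map (subtopology strong_operator_topology B) euclidean
           (\<lambda>T :: 'a::real_normed_vector \<Rightarrow>\<^sub>L 'a. (blinfun_apply T ^^ n) x)"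
proof (induction n)
  case 0
  show ?case
    by simp
next
  case (Suc n)
  have "continuous_map (subtopology strong_operator_topology B)
      (prod_topology (subtopology strong_operator_topology {T. norm T \<le> R}) euclidean)
      (\<lambda>T. (T, (blinfun_apply T ^^ n) x))"
    using assms by (intro continuous_map_pairedI Suc continuous_map_from_subtopology_mono[OF continuous_map_id]
        continuous_map_into_subtopology) (auto simp: continuous_map_in_subtopology)
  from continuous_map_compose[OF this continuous_map_blinfun_apply_bounded]
  show ?case
    by (simp add: o_def)
qed

definition orbit_near_ops :: "real \<Rightarrow> 'a::complex_hilbert \<Rightarrow> 'a \<Rightarrow> real \<Rightarrow> ('a \<Rightarrow>\<^sub>L 'a) set" where
  "orbit_near_ops R x y r = {T \<in> ball_ops R. \<exists>n a. dist (a *\<^sub>C (blinfun_apply T ^^ n) x) y < r}"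

lemma openin_orbit_near_ops:
  "openin (subtopology strong_operator_topology (ball_ops R)) (orbit_near_ops R x y r)"
proof -
  let ?X = "subtopology strong_operator_topology (ball_ops R :: ('a \<Rightarrow>\<^sub>L 'a) set)"
  have "orbit_near_ops R x y r
      = (\<Union>n. \<Union>a. {T \<in> topspace ?X. a *\<^sub>C (blinfun_apply T ^^ n) x \<in> ball y r})"
    by (auto simp: orbit_near_ops_def strong_operator_topology_topspace dist_commute)
  moreover have "openin ?X {T \<in> topspace ?X. a *\<^sub>C (blinfun_apply T ^^ n) x \<in> ball y r}" for n a
  proof (rule openin_continuous_map_preimage)
    have "continuous_map ?X euclidean (\<lambda>T. (blinfun_apply T ^^ n) x)"
      by (rule continuous_map_sot_funpow) (auto simp: ball_ops_def)
    moreover have "continuous_map euclidean euclidean (scaleC a :: 'a \<Rightarrow> 'a)"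
      by (simp add: linear_continuous_on bounded_linear_scaleC)
    ultimately have "continuous_map ?X euclidean (scaleC a \<circ> (\<lambda>T. (blinfun_apply T ^^ n) x))"
      by (rule continuous_map_compose)
    then show "continuous_map ?X euclidean (\<lambda>T. a *\<^sub>C (blinfun_apply T ^^ n) x)"
      by (simp add: o_def)
  qed simp
  ultimately show ?thesis
    by (simp only:) (intro openin_Union; blast)
qed

lemma dense_orbit_near_ops:
  assumes infdim: "infinite_dimensional TYPE('a::complex_hilbert)" and R: "R > 0" and x: "x \<noteq> 0" and r: "r > 0"
  shows "subtopology strong_operator_topology (ball_ops R) closure_of orbit_near_ops R x y r
           = topspace (subtopology strong_operator_topology (ball_ops R :: ('a \<Rightarrow>\<^sub>L 'a) set))"
proof -
  have "T \<in> subtopology strong_operator_topology (ball_ops R) closure_of orbit_near_ops R x y r"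
    if T: "T \<in> ball_ops R" for T
    unfolding in_closure_of
  proof (intro conjI allI impI)
    show "T \<in> topspace (subtopology strong_operator_topology (ball_ops R))"
      using T by (simp add: strong_operator_topology_topspace)
  next
    fix W assume W: "T \<in> W \<and> openin (subtopology strong_operator_topology (ball_ops R)) W"
    then obtain F \<epsilon> where F: "finite F" "\<epsilon> > 0"
      "{S \<in> ball_ops R. \<forall>z\<in>F. norm (S z - T z) < \<epsilon>} \<subseteq> W"
      using openin_sot_contains_basic_nbhd[of "ball_ops R" W T] by blast
    then obtain S where "S \<in> ball_ops R" "\<forall>z\<in>F. norm (S z - T z) < \<epsilon>"
      "\<exists>n a. dist (a *\<^sub>C (blinfun_apply S ^^ n) x) y < r"
      using exists_close_operator_with_orbit_near[OF infdim T R x r F(2,1)] by blast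
    then show "\<exists>S. S \<in> orbit_near_ops R x y r \<and> S \<in> W"
      using F(3) by (auto simp: orbit_near_ops_def)
  qed
  then have "ball_ops R \<subseteq> subtopology strong_operator_topology (ball_ops R) closure_of orbit_near_ops R x y r"
    by blast
  with closure_of_subset_topspace show ?thesis
    by (metis inf_top.left_neutral strong_operator_topology_topspace subset_antisym topspace_subtopology)
qed

lemma close_on_dense_seq_imp_close:
  fixes d :: "nat \<Rightarrow> 'a::real_normed_vector"
  assumes dense: "closure (range d) = UNIV" and \<epsilon>: "\<epsilon> > 0"
  obtains k where "\<And>S T :: 'a \<Rightarrow>\<^sub>L 'b::real_normed_vector. norm S \<le> R \<Longrightarrow> norm T \<le> R \<Longrightarrow>
    norm (blinfun_apply S (d k) - blinfun_apply T (d k)) < \<epsilon> / 2 \<Longrightarrow>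
    norm (blinfun_apply S z - blinfun_apply T z) < \<epsilon>"
proof -
  define \<eta> where "\<eta> = \<epsilon> / (4 * (\<bar>R\<bar> + 1))"
  have "\<eta> > 0" "2 * \<bar>R\<bar> * \<eta> < \<epsilon> / 2"
    using \<epsilon> by (simp_all add: \<eta>_def field_simps)
  obtain k where k: "norm (z - d k) < \<eta>"
    using dense closure_approachable[of z "range d"] \<open>\<eta> > 0\<close> by (auto simp: dist_norm norm_minus_commute)
  have "norm (S z - T z) < \<epsilon>"
    if S: "norm S \<le> R" and T: "norm T \<le> R" and close: "norm (S (d k) - T (d k)) < \<epsilon> / 2"
    for S T :: "'a \<Rightarrow>\<^sub>L 'b"
  proof -
    have eq: "S z - T z = S (z - d k) + (S (d k) - T (d k)) - T (z - d k)"
      by (simp add: blinfun.diff_right algebra_simps)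
    have "norm (S z - T z) \<le> norm (S (z - d k)) + norm (S (d k) - T (d k)) + norm (T (z - d k))"
      unfolding eq using norm_triangle_ineq4[of "S (z - d k) + (S (d k) - T (d k))" "T (z - d k)"]
        norm_triangle_ineq[of "S (z - d k)" "S (d k) - T (d k)"] by linarith
    moreover have "R * norm (z - d k) \<le> \<bar>R\<bar> * \<eta>"
      using k by (intro mult_mono) auto
    ultimately show ?thesis
      using norm_blinfun_apply_le[OF S, of "z - d k"] norm_blinfun_apply_le[OF T, of "z - d k"]
        close \<open>2 * \<bar>R\<bar> * \<eta> < \<epsilon> / 2\<close> by linarith
  qed
  then show ?thesis
    using that by blast
qed

lemma blinfun_eq_on_dense:
  fixes S T :: "'a::real_normed_vector \<Rightarrow>\<^sub>L 'b::real_normed_vector"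
  assumes "closure (range d) = UNIV" "\<And>k. S (d k) = T (d k)"
  shows "S = T"
proof -
  have "closed {z. blinfun_apply (S - T) z = 0}"
    by (intro closed_Collect_eq continuous_on_const linear_continuous_on blinfun.bounded_linear_right)
  moreover have "range d \<subseteq> {z. blinfun_apply (S - T) z = 0}"
    using assms(2) by (auto simp: blinfun.diff_left)
  ultimately have "closure (range d) \<subseteq> {z. blinfun_apply (S - T) z = 0}"
    by (rule closure_minimal[rotated])
  then show ?thesis
    using assms(1) by (auto intro!: blinfun_eqI simp: blinfun.diff_left)
qed

lemma inj_on_evaluations:
  fixes d :: "nat \<Rightarrow> 'a::real_normed_vector"
  assumes "closure (range d) = UNIV"
  shows "inj_on (\<lambda>(T :: 'a \<Rightarrow>\<^sub>L 'b::real_normed_vector) k. T (d k)) B"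
  by (rule inj_onI) (use blinfun_eq_on_dense[OF assms] in \<open>auto simp: fun_eq_iff\<close>)

lemma pointwise_limit_bounded_blinfun:
  fixes T :: "nat \<Rightarrow> 'a::real_normed_vector \<Rightarrow>\<^sub>L 'b::{real_normed_vector, complete_space}"
    and d :: "nat \<Rightarrow> 'a"
  assumes dense: "closure (range d) = UNIV" and bound: "\<And>n. norm (T n) \<le> R"
    and conv: "\<And>k. convergent (\<lambda>n. T n (d k))"
  shows "\<exists>L. norm L \<le> R \<and> (\<forall>z. (\<lambda>n. T n z) \<longlonglongrightarrow> blinfun_apply L z)"
proof -
  have R: "R \<ge> 0"
    using bound[of 0] norm_ge_zero order_trans by blast
  have "Cauchy (\<lambda>n. T n z)" for z
  proof (rule metric_CauchyI)
    fix \<epsilon> :: real assume \<epsilon>: "\<epsilon> > 0"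
    then obtain k where k: "\<And>S T :: 'a \<Rightarrow>\<^sub>L 'b. norm S \<le> R \<Longrightarrow> norm T \<le> R \<Longrightarrow>
        norm (blinfun_apply S (d k) - blinfun_apply T (d k)) < \<epsilon> / 2 \<Longrightarrow>
    norm (blinfun_apply S z - blinfun_apply T z) < \<epsilon>"
      using close_on_dense_seq_imp_close[OF dense] by metis
    obtain M where "\<And>m n. m \<ge> M \<Longrightarrow> n \<ge> M \<Longrightarrow> dist (T m (d k)) (T n (d k)) < \<epsilon> / 2"
      using metric_CauchyD[OF convergent_Cauchy[OF conv[of k]], of "\<epsilon> / 2"] \<epsilon> by auto
    then have "\<forall>m\<ge>M. \<forall>n\<ge>M. dist (T m z) (T n z) < \<epsilon>"
      using k[OF bound bound] by (simp add: dist_norm)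
    then show "\<exists>M. \<forall>m\<ge>M. \<forall>n\<ge>M. dist (T m z) (T n z) < \<epsilon>"
      by blast
  qed
  then obtain L where L: "\<And>z. (\<lambda>n. T n z) \<longlonglongrightarrow> L z"
    unfolding Cauchy_convergent_iff convergent_def by metis
  have "L (a + b) = L a + L b" for a b
    using tendsto_add[OF L[of a] L[of b]] L[of "a + b"] by (simp add: blinfun.add_right LIMSEQ_unique)
  moreover have "L (t *\<^sub>R a) = t *\<^sub>R L a" for t a
    using tendsto_scaleR[OF tendsto_const L[of a], of t] L[of "t *\<^sub>R a"]
    by (simp add: blinfun.scaleR_right LIMSEQ_unique)
  moreover have L_le: "norm (L a) \<le> R * norm a" for a
    by (rule tendsto_upperbound[OF tendsto_norm[OF L]])
      (use norm_blinfun_apply_le[OF bound] in auto)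
  ultimately have "bounded_linear L"
    by (intro bounded_linear_intro[where K=R]) (auto simp: mult.commute)
  then have "blinfun_apply (Blinfun L) = L"
    by (rule bounded_linear_Blinfun_apply)
  moreover have "norm (Blinfun L) \<le> R"
    using R L_le by (intro norm_blinfun_bound) (simp_all add: calculation)
  ultimately show ?thesis
    using L by metis
qed

lemma closed_evaluations_ball_ops:
  fixes d :: "nat \<Rightarrow> 'a::complex_hilbert"
  assumes dense: "closure (range d) = UNIV"
  shows "closed ((\<lambda>T k. blinfun_apply T (d k)) ` ball_ops R)"
  unfolding closed_sequential_limits
proof (intro allI impI, elim conjE)
  fix s :: "nat \<Rightarrow> nat \<Rightarrow> 'a" and l
  assume s: "\<forall>n. s n \<in> (\<lambda>T k. blinfun_apply T (d k)) ` ball_ops R" and lim: "s \<longlonglongrightarrow> l"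
  have "\<forall>n. \<exists>T. T \<in> ball_ops R \<and> s n = (\<lambda>k. blinfun_apply T (d k))"
    using s by blast
  then obtain T where T: "\<And>n. T n \<in> ball_ops R" "\<And>n. s n = (\<lambda>k. T n (d k))"
    by metis
  have coord: "(\<lambda>n. T n (d k)) \<longlonglongrightarrow> l k" for k
    using continuous_on_tendsto_compose[OF continuous_on_product_coordinates lim, of k] T(2)
    by (simp add: o_def)
  obtain L where L: "norm L \<le> R" "\<And>z. (\<lambda>n. T n z) \<longlonglongrightarrow> blinfun_apply L z"
    using pointwise_limit_bounded_blinfun[OF dense, of T R] T(1) coord
    by (auto simp: ball_ops_def convergent_def)
  have "blinfun_apply L (imult z) = imult (L z)" for z
  proof -
    have "(\<lambda>n. T n (imult z)) \<longlonglongrightarrow> imult (L z)"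
      using bounded_linear.tendsto[OF bounded_linear_imult L(2)[of z]] T(1)
      by (simp add: ball_ops_def clinear_op_iff_imult)
    then show ?thesis
      using L(2) LIMSEQ_unique by blast
  qed
  then have "L \<in> ball_ops R"
    using L(1) by (simp add: ball_ops_def clinear_op_iff_imult)
  moreover have "(\<lambda>k. blinfun_apply L (d k)) = l"
    using L(2) coord LIMSEQ_unique by blast
  ultimately show "l \<in> (\<lambda>T k. blinfun_apply T (d k)) ` ball_ops R"
    by blast
qed

lemma continuous_map_inv_evaluations:
  fixes d :: "nat \<Rightarrow> 'a::real_normed_vector" and B :: "('a \<Rightarrow>\<^sub>L 'b::real_normed_vector) set"
  assumes dense: "closure (range d) = UNIV" and B: "B \<subseteq> {T. norm T \<le> R}"
  shows "continuous_map (subtopology euclidean ((\<lambda>T k. blinfun_apply T (d k)) ` B))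
           (subtopology strong_operator_topology B) (inv_into B (\<lambda>T k. blinfun_apply T (d k)))"
proof -
  define \<Phi> where "\<Phi> T = (\<lambda>k. blinfun_apply T (d k))" for T :: "'a \<Rightarrow>\<^sub>L 'b"
  let ?Y = "subtopology euclidean (\<Phi> ` B)"
  have inj: "inj_on \<Phi> B"
    unfolding \<Phi>_def[abs_def] by (rule inj_on_evaluations[OF dense])
  have "continuous_map ?Y euclidean (\<lambda>\<psi>. blinfun_apply (inv_into B \<Phi> \<psi>) z)" for z
    unfolding Met_TC.continuous_map_to_metric[simplified]
  proof (clarsimp)
    fix T0 and \<epsilon> :: real
    assume T0: "T0 \<in> B" and \<epsilon>: "\<epsilon> > 0"
    obtain k where k: "\<And>S T :: 'a \<Rightarrow>\<^sub>L 'b. norm S \<le> R \<Longrightarrow> norm T \<le> R \<Longrightarrow>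
        norm (blinfun_apply S (d k) - blinfun_apply T (d k)) < \<epsilon> / 2 \<Longrightarrow>
        norm (blinfun_apply S z - blinfun_apply T z) < \<epsilon>"
      using close_on_dense_seq_imp_close[OF dense \<epsilon>] by metis
    define W where "W = {\<psi> \<in> topspace ?Y. \<psi> k \<in> ball (\<Phi> T0 k) (\<epsilon> / 2)}"
    have "continuous_map ?Y euclidean (\<lambda>\<psi>. \<psi> k)"
      by (intro continuous_map_from_subtopology) simp
    then have "openin ?Y W"
      unfolding W_def by (rule openin_continuous_map_preimage) simp
    moreover have "\<Phi> T0 \<in> W"
      using T0 \<epsilon> by (simp add: W_def)
    moreover have "dist (inv_into B \<Phi> (\<Phi> T0) z) (inv_into B \<Phi> \<psi> z) < \<epsilon>" if \<psi>: "\<psi> \<in> W" for \<psi>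
    proof -
      obtain T where T: "T \<in> B" "\<psi> = \<Phi> T"
        using \<psi> by (auto simp: W_def)
      have "norm (T0 (d k) - T (d k)) < \<epsilon> / 2"
        using \<psi> T(2) by (simp add: W_def \<Phi>_def dist_norm norm_minus_commute)
      then show ?thesis
        using k T T0 B inj by (auto simp: dist_norm inv_into_f_f)
    qed
    ultimately show "\<exists>W. openin ?Y W \<and> \<Phi> T0 \<in> W
        \<and> (\<forall>\<psi>\<in>W. dist (blinfun_apply (inv_into B \<Phi> (\<Phi> T0)) z) (blinfun_apply (inv_into B \<Phi> \<psi>) z) < \<epsilon>)"
      by blast
  qed
  then show ?thesis
    unfolding continuous_map_in_subtopology continuous_on_strong_operator_topo_iff_coordinatewise \<Phi>_def
    by (auto intro: inv_into_into)
qed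

lemma completely_metrizable_space_sot_ball_ops:
  fixes d :: "nat \<Rightarrow> 'a::complex_hilbert"
  assumes dense: "closure (range d) = UNIV"
  shows "completely_metrizable_space (subtopology strong_operator_topology (ball_ops R :: ('a \<Rightarrow>\<^sub>L 'a) set))"
proof -
  let ?B = "ball_ops R :: ('a \<Rightarrow>\<^sub>L 'a) set"
  let ?X = "subtopology strong_operator_topology ?B"
  define \<Phi> where "\<Phi> T = (\<lambda>k. blinfun_apply T (d k))" for T :: "'a \<Rightarrow>\<^sub>L 'a"
  let ?Y = "subtopology euclidean (\<Phi> ` ?B)"
  have "continuous_map ?X euclidean \<Phi>"
    unfolding \<Phi>_def[abs_def] euclidean_product_topology[symmetric] continuous_map_componentwise_UNIV
    by (auto intro: continuous_map_from_subtopology strong_operator_topology_continuous_evaluation)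
  then have "continuous_map ?X ?Y \<Phi>"
    by (auto simp: continuous_map_in_subtopology strong_operator_topology_topspace)
  moreover have "continuous_map ?Y ?X (inv_into ?B \<Phi>)"
    unfolding \<Phi>_def[abs_def] by (rule continuous_map_inv_evaluations[OF dense]) (auto simp: ball_ops_def)
  moreover have "inj_on \<Phi> ?B"
    unfolding \<Phi>_def[abs_def] by (rule inj_on_evaluations[OF dense])
  ultimately have "homeomorphic_maps ?X ?Y \<Phi> (inv_into ?B \<Phi>)"
    unfolding homeomorphic_maps_def by (auto simp: strong_operator_topology_topspace f_inv_into_f)
  moreover have "completely_metrizable_space ?Y"
    using completely_metrizable_space_closedin[OF completely_metrizable_space_euclidean]
      closed_evaluations_ball_ops[OF dense, of R]
    by (simp add: \<Phi>_def[abs_def])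
  ultimately show ?thesis
    using homeomorphic_completely_metrizable_space homeomorphic_maps_imp_homeomorphic_space by blast
qed

section \<open>Supercyclic vectors\<close>

lemma dense_iff_approx_dense_seq:
  fixes d :: "nat \<Rightarrow> 'a::metric_space"
  assumes dense: "closure (range d) = UNIV"
  shows "closure A = UNIV \<longleftrightarrow> (\<forall>j m. \<exists>a\<in>A. dist a (d j) < 1 / Suc m)"
proof
  assume "closure A = UNIV"
  then have "d j \<in> closure A" for j
    by simp
  then show "\<forall>j m. \<exists>a\<in>A. dist a (d j) < 1 / Suc m"
    unfolding closure_approachable by simp
next
  assume approx: "\<forall>j m. \<exists>a\<in>A. dist a (d j) < 1 / Suc m"
  have "\<exists>a\<in>A. dist a z < \<epsilon>" if "\<epsilon> > 0" for z \<epsilon>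
  proof -
    have "z \<in> closure (range d)"
      by (simp add: dense)
    then obtain j where j: "dist (d j) z < \<epsilon> / 2"
      unfolding closure_approachable using \<open>\<epsilon> > 0\<close> by (metis half_gt_zero imageE)
    obtain m where m: "inverse (real (Suc m)) < \<epsilon> / 2"
      using reals_Archimedean \<open>\<epsilon> > 0\<close> half_gt_zero by blast
    obtain a where a: "a \<in> A" "dist a (d j) < 1 / Suc m"
      using approx by blast
    then have "dist a z < \<epsilon>"
      using dist_triangle[of a z "d j"] j m by (simp add: inverse_eq_divide)
    then show ?thesis
      using a(1) by blast
  qed
  then show "closure A = UNIV"
    by (auto simp: closure_approachable)
qed

lemma supercyclic_iff_approx_dense_seq:
  fixes d :: "nat \<Rightarrow> 'a::complex_hilbert"
  assumes "closure (range d) = UNIV"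
  shows "supercyclic T x \<longleftrightarrow> (\<forall>j m. \<exists>n a. dist (a *\<^sub>C (blinfun_apply T ^^ n) x) (d j) < 1 / Suc m)"
  unfolding supercyclic_def dense_iff_approx_dense_seq[OF assms] by blast

lemma residual_supercyclic_vectors:
  fixes T :: "'a::complex_hilbert \<Rightarrow>\<^sub>L 'a" and d :: "nat \<Rightarrow> 'a"
  assumes dense: "closure (range d) = UNIV" and "closure {x. supercyclic T x} = UNIV"
  shows "residual {x. supercyclic T x}"
proof -
  define V where "V k = {z. \<exists>n a. dist (a *\<^sub>C (blinfun_apply T ^^ n) z) (d (fst (prod_decode k)))
                               < 1 / Suc (snd (prod_decode k))}" for k
  have "open (V k)" for k
  proof -
    have "continuous_on UNIV (\<lambda>z. a *\<^sub>C (blinfun_apply T ^^ n) z)" for n a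
      by (intro linear_continuous_on bounded_linear_compose[OF bounded_linear_scaleC]
          bounded_linear_funpow blinfun.bounded_linear_right)
    then have "open ((\<lambda>z. a *\<^sub>C (blinfun_apply T ^^ n) z) -` ball (d (fst (prod_decode k))) (1 / Suc (snd (prod_decode k))))"
      for n a
      by (intro open_vimage) simp_all
    moreover have "V k = (\<Union>n. \<Union>a. (\<lambda>z. a *\<^sub>C (blinfun_apply T ^^ n) z) -` ball (d (fst (prod_decode k))) (1 / Suc (snd (prod_decode k))))"
      by (auto simp: V_def dist_commute; blast)
    ultimately show ?thesis
      by auto
  qed
  moreover have "closure (V k) = UNIV" for k
    using assms closure_mono[of "{x. supercyclic T x}" "V k"]
    by (auto simp: V_def supercyclic_iff_approx_dense_seq[OF dense])
  moreover have "(\<Inter>k. V k) \<subseteq> {x. supercyclic T x}"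
  proof
    fix z assume "z \<in> (\<Inter>k. V k)"
    then have "z \<in> V (prod_encode (j, m))" for j m
      by blast
    then show "z \<in> {x. supercyclic T x}"
      by (simp add: V_def supercyclic_iff_approx_dense_seq[OF dense])
  qed
  ultimately show ?thesis
    unfolding residual_def by blast
qed

lemma supercyclic_ops_eq_Inter_orbit_near_ops:
  fixes D :: "'a::complex_hilbert set" and d :: "nat \<Rightarrow> 'a"
  assumes dense: "closure (range d) = UNIV" and "D \<noteq> {}"
  shows "{T \<in> ball_ops R. \<forall>x\<in>D. supercyclic T x}
           = (\<Inter>(x, j, m)\<in>D \<times> UNIV \<times> UNIV. orbit_near_ops R x (d j) (1 / Suc m))"
  using assms(2)
  by (auto simp: orbit_near_ops_def supercyclic_iff_approx_dense_seq[OF dense])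

lemma supercyclic_ops_dense_gdelta:
  fixes D :: "'a::complex_hilbert set" and d :: "nat \<Rightarrow> 'a"
  assumes infdim: "infinite_dimensional TYPE('a)" and R: "R > 0"
    and D: "countable D" "D \<noteq> {}" "0 \<notin> D" and dense: "closure (range d) = UNIV"
  shows "gdelta_in (subtopology strong_operator_topology (ball_ops R)) {T \<in> ball_ops R. \<forall>x\<in>D. supercyclic T x}
       \<and> subtopology strong_operator_topology (ball_ops R) closure_of {T \<in> ball_ops R. \<forall>x\<in>D. supercyclic T x}
           = topspace (subtopology strong_operator_topology (ball_ops R))"
proof -
  let ?X = "subtopology strong_operator_topology (ball_ops R :: ('a \<Rightarrow>\<^sub>L 'a) set)"
  let ?G = "(\<lambda>(x, j, m). orbit_near_ops R x (d j) (1 / Suc m)) ` (D \<times> UNIV \<times> UNIV)"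
  have G: "countable ?G" "?G \<noteq> {}"
    using D by auto
  have G_open_dense: "openin ?X U \<and> ?X closure_of U = topspace ?X" if "U \<in> ?G" for U
  proof -
    obtain x j m where "x \<in> D" "U = orbit_near_ops R x (d j) (1 / Suc m)"
      using \<open>U \<in> ?G\<close> by auto
    moreover have "x \<noteq> 0"
      using \<open>x \<in> D\<close> D(3) by auto
    ultimately show ?thesis
      using openin_orbit_near_ops dense_orbit_near_ops[OF infdim R] by simp
  qed
  have "gdelta_in ?X (\<Inter>?G)"
    using G_open_dense by (intro gdelta_in_Inter[OF G] open_imp_gdelta_in) blast
  moreover have "?X closure_of \<Inter>?G = topspace ?X"
    using completely_metrizable_space_sot_ball_ops[OF dense] G(1) G_open_dense
    by (intro Baire_category) auto
  ultimately show ?thesis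
    using supercyclic_ops_eq_Inter_orbit_near_ops[OF dense D(2), of R] by simp
qed

theorem corollary2:
  fixes D :: "'a::complex_hilbert set" and R :: real
  assumes separable: "separable_space (euclidean :: 'a topology)"
    and infdim: "infinite_dimensional TYPE('a)"
    and D_countable: "countable D"
    and D_nonzero: "0 \<notin> D"
    and D_dense: "closure D = UNIV"
    and R_pos: "R > 0"
  shows "gdelta_in (subtopology strong_operator_topology (ball_ops R))
           {T \<in> ball_ops R. \<forall>x\<in>D. supercyclic T x}
       \<and> (subtopology strong_operator_topology (ball_ops R)) closure_of
           {T \<in> ball_ops R. \<forall>x\<in>D. supercyclic T x}
         = topspace (subtopology strong_operator_topology (ball_ops R))
       \<and> (\<forall>T \<in> {T \<in> ball_ops R. \<forall>x\<in>D. supercyclic T x}. residual {x. supercyclic T x})"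
proof -
  have "D \<noteq> {}"
    using D_dense by auto
  then have dense: "closure (range (from_nat_into D)) = UNIV"
    using D_countable D_dense by (simp add: range_from_nat_into)
  have "residual {x. supercyclic T x}" if "\<forall>x\<in>D. supercyclic T x" for T
  proof (rule residual_supercyclic_vectors[OF dense])
    have "closure D \<subseteq> closure {x. supercyclic T x}"
      using that by (intro closure_mono) auto
    then show "closure {x. supercyclic T x} = UNIV"
      using D_dense by auto
  qed
  then show ?thesis
    using supercyclic_ops_dense_gdelta[OF infdim R_pos D_countable \<open>D \<noteq> {}\<close> D_nonzero dense] by blast
qed

end
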